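(* Let $\mathcal{C}$ be a Fraïssé class of rigid finite structures over a finite relational language with Fraïssé limit $M$, and let $A_0\in\mathcal{C}$ be a $2$-element structure. Let $D$ be a directed graph on the domain of $M$ defined by a parameter-free first-order formula $\varphi(x,y)$ such that for every pair $\{x,y\}$ of distinct elements inducing a copy of $A_0$ exactly one of $\varphi(x,y),\varphi(y,x)$ holds, and $D$ has no other arcs. If $D$ contains a directed cycle, then with $A=A_0$ and $B$ the substructure of $M$ induced on the vertex set of that cycle, for every $C\in\mathcal{C}$ there is a $2$-colouring of the embeddings $A\to C$ with no monochromatic embedding $B\to C$; in particular $\mathcal{C}$ is not a Ramsey class.
   Context: A Fraïssé class is a class of finite non-empty structures closed under isomorphism and induced substructures with the joint embedding and amalgamation properties; its Fraïssé limit is the unique countable homogeneous structure whose age is the class. Rigid: trivial automorphism group. Since members of $\mathcal{C}$ embed in $M$ and $\varphi$ is preserved by isomorphisms between finite substructures (by homogeneity), $\varphi$ determines a direction on each copy of $A_0$ in any $C\in\mathcal{C}$. An embedding $g:B\to C$ is monochromatic for a colouring of embeddings $A\to C$ if all embeddings $A\to C$ with image inside $g(B)$ have the same colour. Ramsey class: for all $A,B$ in the class there is $C$ such that every $2$-colouring of embeddings $A\to C$ admits a monochromatic embedding $B\to C$. *)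

theory Defs
  imports "HOL-Library.FuncSet"
begin

text \<open>Relational structures with universe a subset of nat (all structures considered are
countable). A structure is a domain together with an interpretation of relation symbols
as sets of tuples (lists).\<close>

type_synonym 'r struc = "nat set \<times> ('r \<Rightarrow> nat list set)"

definition sdom :: "'r struc \<Rightarrow> nat set" where
  "sdom S = fst S"

definition rel :: "'r struc \<Rightarrow> 'r \<Rightarrow> nat list set" where
  "rel S = snd S"

definition is_struc :: "'r set \<Rightarrow> ('r \<Rightarrow> nat) \<Rightarrow> 'r struc \<Rightarrow> bool" where
  "is_struc L ar S \<longleftrightarrow>
     (\<forall>r. \<forall>t \<in> rel S r. r \<in> L \<and> length t = ar r \<and> set t \<subseteq> sdom S)"

definition induced :: "'r struc \<Rightarrow> nat set \<Rightarrow> 'r struc" where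
  "induced S X = (X, \<lambda>r. {t \<in> rel S r. set t \<subseteq> X})"

text \<open>Embeddings (taken extensional, so that embeddings are identified with their
restriction to the domain).\<close>
definition is_emb :: "'r struc \<Rightarrow> 'r struc \<Rightarrow> (nat \<Rightarrow> nat) \<Rightarrow> bool" where
  "is_emb A B f \<longleftrightarrow> f \<in> extensional (sdom A) \<and> inj_on f (sdom A) \<and> f ` sdom A \<subseteq> sdom B \<and>
     (\<forall>r t. set t \<subseteq> sdom A \<longrightarrow> (t \<in> rel A r \<longleftrightarrow> map f t \<in> rel B r))"

definition is_iso :: "'r struc \<Rightarrow> 'r struc \<Rightarrow> (nat \<Rightarrow> nat) \<Rightarrow> bool" where
  "is_iso A B f \<longleftrightarrow> is_emb A B f \<and> f ` sdom A = sdom B"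

definition isomorphic :: "'r struc \<Rightarrow> 'r struc \<Rightarrow> bool" where
  "isomorphic A B \<longleftrightarrow> (\<exists>f. is_iso A B f)"

definition rigid :: "'r struc \<Rightarrow> bool" where
  "rigid S \<longleftrightarrow> (\<forall>f. is_iso S S f \<longrightarrow> (\<forall>x \<in> sdom S. f x = x))"

definition fin_ne :: "'r struc \<Rightarrow> bool" where
  "fin_ne S \<longleftrightarrow> finite (sdom S) \<and> sdom S \<noteq> {}"

definition fraisse_class :: "'r set \<Rightarrow> ('r \<Rightarrow> nat) \<Rightarrow> 'r struc set \<Rightarrow> bool" where
  "fraisse_class L ar K \<longleftrightarrow>
     K \<noteq> {} \<and>
     (\<forall>S \<in> K. is_struc L ar S \<and> fin_ne S) \<and>
     (\<forall>S \<in> K. \<forall>T. is_struc L ar T \<and> isomorphic S T \<longrightarrow> T \<in> K) \<and>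
     (\<forall>S \<in> K. \<forall>X. X \<subseteq> sdom S \<and> X \<noteq> {} \<longrightarrow> induced S X \<in> K) \<and>
     (\<forall>A \<in> K. \<forall>B \<in> K. \<exists>C \<in> K. \<exists>f g. is_emb A C f \<and> is_emb B C g) \<and>
     (\<forall>A \<in> K. \<forall>B \<in> K. \<forall>C \<in> K. \<forall>f g. is_emb A B f \<and> is_emb A C g \<longrightarrow>
        (\<exists>D \<in> K. \<exists>f' g'. is_emb B D f' \<and> is_emb C D g' \<and>
            (\<forall>x \<in> sdom A. f' (f x) = g' (g x))))"

definition age :: "'r set \<Rightarrow> ('r \<Rightarrow> nat) \<Rightarrow> 'r struc \<Rightarrow> 'r struc set" where
  "age L ar M = {S. is_struc L ar S \<and> fin_ne S \<and>
     (\<exists>X. X \<subseteq> sdom M \<and> finite X \<and> X \<noteq> {} \<and> isomorphic S (induced M X))}"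

definition homogeneous :: "'r struc \<Rightarrow> bool" where
  "homogeneous M \<longleftrightarrow>
     (\<forall>X Y f. finite X \<and> finite Y \<and> X \<subseteq> sdom M \<and> Y \<subseteq> sdom M \<and>
        is_iso (induced M X) (induced M Y) f \<longrightarrow>
        (\<exists>g. is_iso M M g \<and> (\<forall>x \<in> X. g x = f x)))"

definition fraisse_limit :: "'r set \<Rightarrow> ('r \<Rightarrow> nat) \<Rightarrow> 'r struc set \<Rightarrow> 'r struc \<Rightarrow> bool" where
  "fraisse_limit L ar K M \<longleftrightarrow> is_struc L ar M \<and> homogeneous M \<and> age L ar M = K"

datatype 'r fm = Eq nat nat | Rel 'r "nat list" | Neg "'r fm" | Conj "'r fm" "'r fm"
  | Ex nat "'r fm"

fun sat :: "'r struc \<Rightarrow> (nat \<Rightarrow> nat) \<Rightarrow> 'r fm \<Rightarrow> bool" where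
  "sat S v (Eq i j) = (v i = v j)"
| "sat S v (Rel r is) = (map v is \<in> rel S r)"
| "sat S v (Neg \<phi>) = (\<not> sat S v \<phi>)"
| "sat S v (Conj \<phi> \<psi>) = (sat S v \<phi> \<and> sat S v \<psi>)"
| "sat S v (Ex i \<phi>) = (\<exists>a \<in> sdom S. sat S (v(i := a)) \<phi>)"

fun fv :: "'r fm \<Rightarrow> nat set" where
  "fv (Eq i j) = {i, j}"
| "fv (Rel r is) = set is"
| "fv (Neg \<phi>) = fv \<phi>"
| "fv (Conj \<phi> \<psi>) = fv \<phi> \<union> fv \<psi>"
| "fv (Ex i \<phi>) = fv \<phi> - {i}"

fun in_lang :: "'r set \<Rightarrow> ('r \<Rightarrow> nat) \<Rightarrow> 'r fm \<Rightarrow> bool" where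
  "in_lang L ar (Eq i j) = True"
| "in_lang L ar (Rel r is) = (r \<in> L \<and> length is = ar r)"
| "in_lang L ar (Neg \<phi>) = in_lang L ar \<phi>"
| "in_lang L ar (Conj \<phi> \<psi>) = (in_lang L ar \<phi> \<and> in_lang L ar \<psi>)"
| "in_lang L ar (Ex i \<phi>) = in_lang L ar \<phi>"

definition arcs :: "'r struc \<Rightarrow> 'r fm \<Rightarrow> (nat \<times> nat) set" where
  "arcs M \<phi> = {(x, y). x \<in> sdom M \<and> y \<in> sdom M \<and> sat M (\<lambda>i. if i = 0 then x else y) \<phi>}"

definition monochromatic ::
  "((nat \<Rightarrow> nat) \<Rightarrow> bool) \<Rightarrow> 'r struc \<Rightarrow> 'r struc \<Rightarrow> 'r struc \<Rightarrow> (nat \<Rightarrow> nat) \<Rightarrow> bool" where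
  "monochromatic col A B C g \<longleftrightarrow>
     (\<forall>f1 f2. is_emb A C f1 \<and> is_emb A C f2 \<and> f1 ` sdom A \<subseteq> g ` sdom B \<and>
        f2 ` sdom A \<subseteq> g ` sdom B \<longrightarrow> col f1 = col f2)"

definition ramsey_class :: "'r struc set \<Rightarrow> bool" where
  "ramsey_class K \<longleftrightarrow>
     (\<forall>A \<in> K. \<forall>B \<in> K. \<exists>C \<in> K. \<forall>col :: (nat \<Rightarrow> nat) \<Rightarrow> bool.
        \<exists>g. is_emb B C g \<and> monochromatic col A B C g)"

end

theory Submission
  imports Defs
begin

text \<open>Every automorphism of the Fraisse limit M preserves the defining formula of the digraph,
so by homogeneity all copies of the two-element structure A0 carrying an arc are oriented in
the same way: there are a0 and a1 with sdom A0 = {a0, a1} such that every arc (x, y) is the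
image of (a0, a1) under an isomorphism from A0. Colour an embedding f of A0 by whether
f a0 < f a1 in the natural order on the universe of C. An embedding g of the cycle B that is
monochromatic would then be strictly increasing or strictly decreasing along the whole cycle,
which is impossible.\<close>

lemma sdom_induced [simp]: "sdom (induced S X) = X"
  by (simp add: sdom_def induced_def)

lemma rel_induced [simp]: "rel (induced S X) r = {t \<in> rel S r. set t \<subseteq> X}"
  by (simp add: rel_def induced_def)

lemma is_emb_comp:
  assumes "is_emb A B f" "is_emb B C g"
  shows "is_emb A C (restrict (g \<circ> f) (sdom A))"
proof -
  have inj: "inj_on f (sdom A)" "inj_on g (sdom B)"
    and im: "f ` sdom A \<subseteq> sdom B" "g ` sdom B \<subseteq> sdom C"
    using assms by (auto simp: is_emb_def)
  have "inj_on (g \<circ> f) (sdom A)"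
    using inj im by (meson comp_inj_on inj_on_subset)
  then have "inj_on (restrict (g \<circ> f) (sdom A)) (sdom A)"
    by (simp add: inj_on_def)
  moreover have "t \<in> rel A r \<longleftrightarrow> map (restrict (g \<circ> f) (sdom A)) t \<in> rel C r"
    if "set t \<subseteq> sdom A" for r t
  proof -
    have comp: "map (restrict (g \<circ> f) (sdom A)) t = map g (map f t)"
      using that by (auto intro!: map_cong)
    have "set (map f t) \<subseteq> sdom B"
      using that im by auto
    then show ?thesis
      unfolding comp using assms that by (auto simp: is_emb_def)
  qed
  ultimately show ?thesis
    using im by (auto simp: is_emb_def image_subset_iff)
qed

lemma is_iso_comp:
  assumes "is_iso A B f" "is_iso B C g"
  shows "is_iso A C (restrict (g \<circ> f) (sdom A))"
proof -
  have "restrict (g \<circ> f) (sdom A) ` sdom A = g ` f ` sdom A"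
    by auto
  then show ?thesis
    using is_emb_comp[of A B f C g] assms by (simp add: is_iso_def)
qed

lemma is_iso_inv:
  assumes "is_iso A B f"
  shows "is_iso B A (restrict (inv_into (sdom A) f) (sdom B))"
proof -
  let ?h = "restrict (inv_into (sdom A) f) (sdom B)"
  have bij: "bij_betw f (sdom A) (sdom B)"
    using assms by (auto simp: is_iso_def is_emb_def bij_betw_def)
  then have bij_inv: "bij_betw ?h (sdom B) (sdom A)"
    by (simp add: bij_betw_inv_into cong: bij_betw_cong)
  have "t \<in> rel B r \<longleftrightarrow> map ?h t \<in> rel A r" if "set t \<subseteq> sdom B" for r t
  proof -
    have "set (map ?h t) \<subseteq> sdom A"
      using that bij_inv by (auto simp: bij_betw_def)
    moreover have "map f (map ?h t) = t"
      using that bij by (auto simp: bij_betw_def f_inv_into_f intro!: map_idI)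
    ultimately show ?thesis
      using assms unfolding is_iso_def is_emb_def by metis
  qed
  then show ?thesis
    using bij_inv by (auto simp: is_iso_def is_emb_def bij_betw_def)
qed

lemma isomorphic_sym: "isomorphic A B \<Longrightarrow> isomorphic B A"
  unfolding isomorphic_def using is_iso_inv by blast

lemma isomorphic_refl: "isomorphic S S"
proof -
  have "map (restrict id (sdom S)) t = t" if "set t \<subseteq> sdom S" for t
    using that by (induction t) auto
  then have "is_iso S S (restrict id (sdom S))"
    by (auto simp: is_iso_def is_emb_def)
  then show ?thesis
    unfolding isomorphic_def by blast
qed

lemma is_emb_induced_mono:
  assumes "is_emb A (induced M X) f" "X \<subseteq> Y"
  shows "is_emb A (induced M Y) f"
proof -
  have "set (map f t) \<subseteq> X" if "set t \<subseteq> sdom A" for t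
    using that assms(1) by (auto simp: is_emb_def)
  then show ?thesis
    using assms unfolding is_emb_def by (auto 0 4)
qed

lemma induced_in_age:
  assumes "is_struc L ar M" "X \<subseteq> sdom M" "finite X" "X \<noteq> {}"
  shows "induced M X \<in> age L ar M"
proof -
  have "is_struc L ar (induced M X)"
    using assms(1) by (auto simp: is_struc_def)
  then show ?thesis
    using assms isomorphic_refl[of "induced M X"] unfolding age_def fin_ne_def by auto
qed

lemma sat_automorphism:
  assumes "is_iso M M \<sigma>" "\<forall>i. v i \<in> sdom M"
  shows "sat M (\<sigma> \<circ> v) \<phi> \<longleftrightarrow> sat M v \<phi>"
  using assms(2)
proof (induction \<phi> arbitrary: v)
  case (Eq i j)
  then show ?case
    using assms(1) by (auto simp: is_iso_def is_emb_def inj_on_def)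
next
  case (Rel r xs)
  then have "set (map v xs) \<subseteq> sdom M"
    by auto
  moreover have "map (\<sigma> \<circ> v) xs = map \<sigma> (map v xs)"
    by simp
  ultimately show ?case
    using assms(1) unfolding is_iso_def is_emb_def sat.simps by metis
next
  case (Ex i \<phi>)
  have onto: "\<sigma> ` sdom M = sdom M"
    using assms(1) by (simp add: is_iso_def)
  have "sat M (\<sigma> \<circ> v) (Ex i \<phi>) \<longleftrightarrow> (\<exists>a\<in>\<sigma> ` sdom M. sat M ((\<sigma> \<circ> v)(i := a)) \<phi>)"
    using onto by simp
  also have "\<dots> \<longleftrightarrow> (\<exists>b\<in>sdom M. sat M ((\<sigma> \<circ> v)(i := \<sigma> b)) \<phi>)"
    by blast
  also have "\<dots> \<longleftrightarrow> (\<exists>b\<in>sdom M. sat M (\<sigma> \<circ> v(i := b)) \<phi>)"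
    by (simp add: fun_upd_comp)
  also have "\<dots> \<longleftrightarrow> sat M v (Ex i \<phi>)"
  proof -
    have "sat M (\<sigma> \<circ> v(i := b)) \<phi> \<longleftrightarrow> sat M (v(i := b)) \<phi>" if "b \<in> sdom M" for b
      using Ex.prems that by (intro Ex.IH) simp
    then show ?thesis
      by auto
  qed
  finally show ?case .
qed simp_all

lemma arcs_automorphism:
  assumes "is_iso M M \<sigma>" "(x, y) \<in> arcs M \<phi>"
  shows "(\<sigma> x, \<sigma> y) \<in> arcs M \<phi>"
proof -
  let ?v = "\<lambda>i::nat. if i = 0 then x else y"
  have xy: "x \<in> sdom M" "y \<in> sdom M" "sat M ?v \<phi>"
    using assms(2) by (auto simp: arcs_def)
  then have "sat M (\<sigma> \<circ> ?v) \<phi>"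
    using sat_automorphism[OF assms(1), of ?v] by auto
  moreover have "\<sigma> \<circ> ?v = (\<lambda>i. if i = 0 then \<sigma> x else \<sigma> y)"
    by auto
  moreover have "\<sigma> x \<in> sdom M" "\<sigma> y \<in> sdom M"
    using assms(1) xy by (auto simp: is_iso_def)
  ultimately show ?thesis
    by (auto simp: arcs_def)
qed

lemma homogeneous_extend_iso:
  assumes "homogeneous M" "finite X" "finite Y" "X \<subseteq> sdom M" "Y \<subseteq> sdom M"
    and "is_iso A (induced M X) \<psi>" "is_iso A (induced M Y) \<psi>'"
  obtains \<sigma> where "is_iso M M \<sigma>" "\<forall>a \<in> sdom A. \<sigma> (\<psi> a) = \<psi>' a"
proof -
  let ?\<chi> = "restrict (inv_into (sdom A) \<psi>) X"
  let ?\<tau> = "restrict (\<psi>' \<circ> ?\<chi>) X"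
  have "is_iso (induced M X) A ?\<chi>"
    using is_iso_inv[OF assms(6)] by simp
  then have "is_iso (induced M X) (induced M Y) ?\<tau>"
    using is_iso_comp[OF _ assms(7)] by fastforce
  then obtain \<sigma> where \<sigma>: "is_iso M M \<sigma>" "\<forall>x \<in> X. \<sigma> x = ?\<tau> x"
    using assms(1)[unfolded homogeneous_def, rule_format, of X Y ?\<tau>] assms(2-5) by blast
  have "\<sigma> (\<psi> a) = \<psi>' a" if "a \<in> sdom A" for a
  proof -
    have "inj_on \<psi> (sdom A)" "\<psi> a \<in> X"
      using assms(6) that by (auto simp: is_iso_def is_emb_def)
    then show ?thesis
      using \<sigma>(2) that by simp
  qed
  then show ?thesis
    using that \<sigma>(1) by blast
qed

lemma arcs_uniformly_oriented:
  assumes "homogeneous M" "card (sdom A0) = 2"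
    and tournament: "\<forall>x \<in> sdom M. \<forall>y \<in> sdom M. x \<noteq> y \<and> isomorphic (induced M {x, y}) A0 \<longrightarrow>
           ((x, y) \<in> arcs M \<phi> \<longleftrightarrow> (y, x) \<notin> arcs M \<phi>)"
    and arcs_on_copies: "\<forall>(x, y) \<in> arcs M \<phi>. x \<noteq> y \<and> isomorphic (induced M {x, y}) A0"
    and "(x0, y0) \<in> arcs M \<phi>"
  obtains a0 a1 where "sdom A0 = {a0, a1}" "a0 \<noteq> a1"
    and "\<And>x y. (x, y) \<in> arcs M \<phi> \<Longrightarrow>
           \<exists>\<psi>. is_iso A0 (induced M {x, y}) \<psi> \<and> \<psi> a0 = x \<and> \<psi> a1 = y"
proof -
  have copy: "\<exists>\<psi>. is_iso A0 (induced M {x, y}) \<psi>" if "(x, y) \<in> arcs M \<phi>" for x y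
    using arcs_on_copies that isomorphic_sym unfolding isomorphic_def by blast
  have in_M: "{x, y} \<subseteq> sdom M" if "(x, y) \<in> arcs M \<phi>" for x y
    using that by (auto simp: arcs_def)
  obtain \<psi>0 where \<psi>0: "is_iso A0 (induced M {x0, y0}) \<psi>0"
    using copy assms(5) by blast
  then have onto0: "\<psi>0 ` sdom A0 = {x0, y0}"
    by (simp add: is_iso_def)
  obtain a0 a1 where a: "sdom A0 = {a0, a1}" "a0 \<noteq> a1" "\<psi>0 a0 = x0" "\<psi>0 a1 = y0"
  proof -
    obtain a b where ab: "sdom A0 = {a, b}" "a \<noteq> b"
      using assms(2) by (auto simp: card_2_iff)
    have "x0 \<noteq> y0"
      using arcs_on_copies assms(5) by blast
    then show ?thesis
      using that ab onto0 by (auto simp: doubleton_eq_iff insert_commute)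
  qed
  have "\<exists>\<psi>. is_iso A0 (induced M {x, y}) \<psi> \<and> \<psi> a0 = x \<and> \<psi> a1 = y"
    if xy: "(x, y) \<in> arcs M \<phi>" for x y
  proof -
    obtain \<psi> where \<psi>: "is_iso A0 (induced M {x, y}) \<psi>"
      using copy xy by blast
    obtain \<sigma> where \<sigma>: "is_iso M M \<sigma>" "\<forall>a \<in> sdom A0. \<sigma> (\<psi>0 a) = \<psi> a"
      using homogeneous_extend_iso[OF assms(1) _ _ in_M in_M \<psi>0 \<psi>] assms(5) xy by blast
    have arc: "(\<psi> a0, \<psi> a1) \<in> arcs M \<phi>"
      using arcs_automorphism[OF \<sigma>(1) assms(5)] \<sigma>(2) a by auto
    have "{\<psi> a0, \<psi> a1} = {x, y}" "\<psi> a0 \<noteq> \<psi> a1"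
      using \<psi> a by (auto simp: is_iso_def is_emb_def)
    moreover have "(y, x) \<notin> arcs M \<phi>"
      using tournament arcs_on_copies xy in_M[OF xy] by blast
    ultimately have "\<psi> a0 = x \<and> \<psi> a1 = y"
      using arc by (auto simp: doubleton_eq_iff)
    then show ?thesis
      using \<psi> by blast
  qed
  then show ?thesis
    using that a(1,2) by blast
qed

lemma cycle_not_strictly_increasing:
  fixes f :: "'a \<Rightarrow> 'b::linorder"
  assumes "vs \<noteq> []"
  shows "\<exists>i < length vs. \<not> f (vs ! i) < f (vs ! ((i + 1) mod length vs))"
proof -
  have "Max (f ` set vs) \<in> f ` set vs"
    using assms by simp
  then obtain x where x: "x \<in> set vs" "f x = Max (f ` set vs)"
    by auto
  then obtain i where i: "i < length vs" "vs ! i = x"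
    by (auto simp: in_set_conv_nth)
  have "f (vs ! ((i + 1) mod length vs)) \<le> f x"
    using assms x(2) by simp
  then show ?thesis
    using i by auto
qed

lemma cycle_not_monochromatic:
  assumes "vs \<noteq> []" "a0 \<in> sdom A" "a1 \<in> sdom A" "a0 \<noteq> a1"
    and edges: "\<forall>i < length vs. \<exists>\<psi>. is_emb A B \<psi> \<and>
                  \<psi> a0 = vs ! i \<and> \<psi> a1 = vs ! ((i + 1) mod length vs)"
    and g: "is_emb B C g"
  shows "\<not> monochromatic (\<lambda>f. f a0 < f a1) A B C g"
proof
  let ?n = "length vs"
  define nx where "nx i = (i + 1) mod ?n" for i
  assume mono: "monochromatic (\<lambda>f. f a0 < f a1) A B C g"
  obtain \<psi> where \<psi>: "is_emb A B (\<psi> i)" "\<psi> i a0 = vs ! i" "\<psi> i a1 = vs ! nx i"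
    if "i < ?n" for i
    using edges unfolding nx_def by metis
  define e where "e i = restrict (g \<circ> \<psi> i) (sdom A)" for i
  have e: "is_emb A C (e i)" "e i ` sdom A \<subseteq> g ` sdom B" if "i < ?n" for i
    using is_emb_comp[OF \<psi>(1)[OF that] g] \<psi>(1)[OF that]
    by (auto simp: e_def is_emb_def)
  have e_ends: "e i a0 = g (vs ! i)" "e i a1 = g (vs ! nx i)" if "i < ?n" for i
    using \<psi>[OF that] assms(2,3) by (simp_all add: e_def)
  have same_colour: "(g (vs ! i) < g (vs ! nx i)) = (g (vs ! 0) < g (vs ! nx 0))"
    if "i < ?n" for i
    using mono[unfolded monochromatic_def, rule_format, of "e i" "e 0"] e[OF that] e
      e_ends[OF that] e_ends assms(1) by auto
  have g_differs: "g (vs ! i) \<noteq> g (vs ! nx i)" if "i < ?n" for i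
  proof -
    have "\<psi> i a0 \<noteq> \<psi> i a1" "\<psi> i a0 \<in> sdom B" "\<psi> i a1 \<in> sdom B"
      using \<psi>(1)[OF that] assms(2-4) by (auto simp: is_emb_def inj_on_def)
    then show ?thesis
      using g \<psi>(2,3)[OF that] by (auto simp: is_emb_def inj_on_def)
  qed
  show False
  proof (cases "g (vs ! 0) < g (vs ! nx 0)")
    case True
    then show False
      using cycle_not_strictly_increasing[OF assms(1), of g] same_colour
      by (auto simp: nx_def)
  next
    case False
    then have "g (vs ! nx i) < g (vs ! i)" if "i < ?n" for i
      using same_colour[OF that] g_differs[OF that] by auto
    then show False
      using cycle_not_strictly_increasing[OF assms(1), of "\<lambda>x. - int (g x)"]
      by (auto simp: nx_def)
  qed
qed

theorem mainTheorem7: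
  fixes L :: "'r set" and ar :: "'r \<Rightarrow> nat" and K :: "'r struc set"
    and M A0 :: "'r struc" and \<phi> :: "'r fm" and vs :: "nat list"
  assumes "finite L"
    and "fraisse_class L ar K"
    and "\<forall>S \<in> K. rigid S"
    and "fraisse_limit L ar K M"
    and "A0 \<in> K" and "card (sdom A0) = 2"
    and "in_lang L ar \<phi>" and "fv \<phi> \<subseteq> {0, 1}"
    and "\<forall>x \<in> sdom M. \<forall>y \<in> sdom M. x \<noteq> y \<and> isomorphic (induced M {x, y}) A0 \<longrightarrow>
           ((x, y) \<in> arcs M \<phi> \<longleftrightarrow> (y, x) \<notin> arcs M \<phi>)"
    and "\<forall>(x, y) \<in> arcs M \<phi>. x \<noteq> y \<and> isomorphic (induced M {x, y}) A0"
    and "vs \<noteq> []" and "distinct vs"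
    and "\<forall>i < length vs. (vs ! i, vs ! ((i + 1) mod length vs)) \<in> arcs M \<phi>"
  shows "(\<forall>C \<in> K. \<exists>col :: (nat \<Rightarrow> nat) \<Rightarrow> bool.
            \<not> (\<exists>g. is_emb (induced M (set vs)) C g \<and>
                   monochromatic col A0 (induced M (set vs)) C g))
         \<and> \<not> ramsey_class K"
proof -
  let ?n = "length vs" and ?B = "induced M (set vs)"
  have M: "is_struc L ar M" "homogeneous M" "age L ar M = K"
    using assms(4) by (simp_all add: fraisse_limit_def)
  have cycle_arc: "(vs ! i, vs ! ((i + 1) mod ?n)) \<in> arcs M \<phi>" if "i < ?n" for i
    using assms(13) that by blast
  obtain a0 a1 where A0: "sdom A0 = {a0, a1}" "a0 \<noteq> a1"
    and oriented: "\<And>x y. (x, y) \<in> arcs M \<phi> \<Longrightarrow>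
           \<exists>\<psi>. is_iso A0 (induced M {x, y}) \<psi> \<and> \<psi> a0 = x \<and> \<psi> a1 = y"
    using arcs_uniformly_oriented[OF M(2) assms(6,9,10) cycle_arc[of 0]] assms(11) by blast
  have "\<exists>\<psi>. is_emb A0 ?B \<psi> \<and> \<psi> a0 = vs ! i \<and> \<psi> a1 = vs ! ((i + 1) mod ?n)"
    if i: "i < ?n" for i
  proof -
    have "vs ! ((i + 1) mod ?n) \<in> set vs"
      using assms(11) by simp
    then have "{vs ! i, vs ! ((i + 1) mod ?n)} \<subseteq> set vs"
      using i by simp
    then show ?thesis
      using oriented[OF cycle_arc[OF i]] is_emb_induced_mono unfolding is_iso_def by metis
  qed
  then have no_mono_copy: "\<not> (\<exists>g. is_emb ?B C g \<and> monochromatic (\<lambda>f. f a0 < f a1) A0 ?B C g)" for C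
    using cycle_not_monochromatic[OF assms(11)] A0 by blast
  have "set vs \<subseteq> sdom M"
    using cycle_arc by (auto simp: in_set_conv_nth arcs_def)
  then have "?B \<in> K"
    using induced_in_age[OF M(1)] M(3) assms(11) by auto
  then show ?thesis
    using no_mono_copy assms(5) unfolding ramsey_class_def by blast
qed

end
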